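(* Let $n\ge2$, let $\nabla$ be an affine connection on $M$ with Christoffel symbols $\Gamma^i{}_{jk}$ on a chart $(U,x^i)$, let $P$ be the projective structure determined by $\nabla$ and $\omega=(\omega^i,\omega^i{}_j,\omega_j)$ the normal projective connection of $P$. Then there is a unique section $\sigma\colon U\to P$ such that (1) $\sigma^*\omega^i=dx^i$, and (2) writing $\sigma^*\omega^i{}_j=\Pi^i{}_{jk}dx^k$, one has $\Pi^i{}_{ik}=\mu_k$. This section also satisfies (2') $\Pi^i{}_{ji}=-\mu_j$, and condition (2) may be replaced by (2') (yielding the same unique section). Moreover, writing $\sigma^*\omega_j=\Pi_{jk}dx^k$, $$\Pi^i{}_{jk}=\Gamma^i{}_{jk}+\delta^i{}_j\nu_k+\delta^i{}_k\nu_j=\Gamma^i{}_{jk}-\tfrac1{2(n+1)}\big(\delta^i{}_j(\Gamma^\alpha{}_{\alpha k}+\Gamma^\alpha{}_{k\alpha})+\delta^i{}_k(\Gamma^\alpha{}_{\alpha j}+\Gamma^\alpha{}_{j\alpha})\big),$$ $$\Pi_{jk}=\frac{-1}{n^2-1}\Big(n\Big(\frac{\partial\Pi^i{}_{jk}}{\partial x^i}+\frac{\partial\mu_j}{\partial x^k}-\mu_\alpha\Pi^\alpha{}_{jk}-\Pi^\alpha{}_{j\beta}\Pi^\beta{}_{\alpha k}\Big)+\Big(\frac{\partial\Pi^i{}_{kj}}{\partial x^i}+\frac{\partial\mu_k}{\partial x^j}-\mu_\alpha\Pi^\alpha{}_{kj}-\Pi^\alpha{}_{k\beta}\Pi^\beta{}_{\alpha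 j}\Big)\Big).$$
   Context: Einstein summation. Christoffel symbols: $\Gamma^i{}_{jk}=dx^i(\nabla_{\partial/\partial x^k}\partial/\partial x^j)$. Reduced torsion $\mu_j=\frac12(\Gamma^\alpha{}_{\alpha j}-\Gamma^\alpha{}_{j\alpha})$ and $\nu_j=-\frac1{2(n+1)}(\Gamma^\alpha{}_{\alpha j}+\Gamma^\alpha{}_{j\alpha})$. Formal frames: $\widetilde G^2$ = pairs $(a^i{}_j,a^i{}_{jk})\in\mathrm{GL}_n\times\mathbb R^{n^3}$ with product $(a^i{}_j,a^i{}_{jk})(b^i{}_j,b^i{}_{jk})=(a^i{}_lb^l{}_j,a^i{}_lb^l{}_{jk}+a^i{}_{lm}b^l{}_jb^m{}_k)$; $\widetilde P^2(M)=P^2(M)\times_{G^2}\widetilde G^2$ with natural coordinates $(u^i,u^i{}_j,u^i{}_{jk})$ and canonical form $\theta^i=v^i{}_\alpha du^\alpha$, $\theta^i{}_j=v^i{}_\alpha du^\alpha{}_j-v^i{}_\alpha u^\alpha{}_{j\beta}v^\beta{}_\gamma du^\gamma$, $(v)=(u^i{}_j)^{-1}$. $H^2=\{(a^i{}_j,-(a^i{}_ja_k+a_ja^i{}_k))\}$. The projective structure determined by $\nabla$ is $P=\{(x,\delta^i{}_j,-\Gamma^i{}_{jk}).h: h\in H^2\}$. Cartan connections (on principal $H$-bundles, $H\cong H^2$ the isotropy group of $[0:\dots:0:1]$ in $\mathrm{PGL}_{n+1}(\mathbb R)$, $\mathfrak g=\mathfrak m\oplus\mathfrak{gl}_n\oplus\mathfrak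 m^*$), their curvature $\Omega^i{}_j=d\omega^i{}_j+\omega^i{}_k\wedge\omega^k{}_j+\omega^i\wedge\omega_j-\delta^i{}_j\omega_k\wedge\omega^k=\frac12K^i{}_{jkl}\omega^k\wedge\omega^l$. The normal projective connection of $P$ is the unique Cartan connection $\omega$ on $P$ whose components $(\omega^i,\omega^i{}_j)$ are the restriction of $(\theta^i,\theta^i{}_j)$ and with $K^i{}_{jil}=0$. *)

theory Defs
  imports "HOL-Analysis.Analysis"
begin

text \<open>The chart domain U is an open subset of real^'n,
  the dimension being n = CARD('n). Index conventions:
  Gamma i j k x = Christoffel symbol Gamma^i_{jk} at x;
  a frame point of tilde P^2(U) is (u, u1, u2) with u1 $ i $ j = u^i_j and
  u2 $ i $ j $ k = u^i_{jk};
  an element of g = m + gl_n + m^* is (u^i, A^i_j, eta_j).\<close>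

type_synonym 'n frame = "(real^'n) \<times> (real^'n^'n) \<times> (real^'n^'n^'n)"
type_synonym 'n galg = "(real^'n) \<times> (real^'n^'n) \<times> (real^'n)"

definition kd :: "'n \<Rightarrow> 'n \<Rightarrow> real" where
  "kd i j = (if i = j then 1 else 0)"

text \<open>Directional (partial) derivative; for b = axis i 1 this is d/dx^i.\<close>
definition pder :: "'a::real_vector \<Rightarrow> ('a \<Rightarrow> 'b::real_normed_vector) \<Rightarrow> 'a \<Rightarrow> 'b" where
  "pder b f x = vector_derivative (\<lambda>t. f (x + t *\<^sub>R b)) (at 0)"

primrec cdiff :: "nat \<Rightarrow> ('a::euclidean_space \<Rightarrow> 'b::real_normed_vector) \<Rightarrow> 'a set \<Rightarrow> bool" where
  "cdiff 0 f U = continuous_on U f"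
| "cdiff (Suc k) f U = ((\<forall>x\<in>U. f differentiable (at x)) \<and> (\<forall>b\<in>Basis. cdiff k (pder b f) U))"

definition cinf_on :: "('a::euclidean_space \<Rightarrow> 'b::real_normed_vector) \<Rightarrow> 'a set \<Rightarrow> bool" where
  "cinf_on f U = (\<forall>k. cdiff k f U)"

text \<open>Right action of tilde G^2 on tilde P^2 in natural coordinates (linear in the point,
  hence it is also its own differential on tangent vectors).\<close>
fun gact :: "'n frame \<Rightarrow> (real^'n^'n) \<times> (real^'n^'n^'n) \<Rightarrow> 'n frame" where
  "gact (x, u, u2) (b, b2) =
     (x, u ** b,
      \<chi> i j k. (\<Sum>l\<in>UNIV. u$i$l * b2$l$j$k) + (\<Sum>l\<in>UNIV. \<Sum>m\<in>UNIV. u2$i$l$m * b$l$j * b$m$k))"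

text \<open>The element of H^2 with parameters (a^i_j, a_k).  It corresponds to the class of
  the matrix [[a,0],[xi,1]] in PGL_{n+1} (the 2-jet at the origin of x |-> a x/(1+xi x)).\<close>
definition hjet :: "real^'n^'n \<Rightarrow> real^'n \<Rightarrow> (real^'n^'n) \<times> (real^'n^'n^'n)" where
  "hjet a \<xi> = (a, \<chi> i j k. - (a$i$j * \<xi>$k + \<xi>$j * a$i$k))"

definition proj_structure :: "('n::finite \<Rightarrow> 'n \<Rightarrow> 'n \<Rightarrow> real^'n \<Rightarrow> real) \<Rightarrow> (real^'n) set \<Rightarrow> 'n frame set" where
  "proj_structure \<Gamma> U =
     {gact (x, mat 1, \<chi> i j k. - \<Gamma> i j k x) (hjet a \<xi>) | x a \<xi>. x \<in> U \<and> invertible a}"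

definition tspace :: "'a::real_normed_vector set \<Rightarrow> 'a \<Rightarrow> 'a set" where
  "tspace S p = {v. \<exists>\<gamma>. (\<forall>t. \<gamma> t \<in> S) \<and> \<gamma> 0 = p \<and> (\<gamma> has_vector_derivative v) (at 0)}"

fun theta1 :: "'n frame \<Rightarrow> 'n frame \<Rightarrow> real^'n" where
  "theta1 (x, u, u2) (dx, du, du2) = matrix_inv u *v dx"

fun theta2 :: "'n frame \<Rightarrow> 'n frame \<Rightarrow> real^'n^'n" where
  "theta2 (x, u, u2) (dx, du, du2) =
     matrix_inv u ** du
     - (\<chi> i j. \<Sum>\<alpha>\<in>UNIV. \<Sum>\<beta>\<in>UNIV. (matrix_inv u)$i$\<alpha> * u2$\<alpha>$j$\<beta> * (matrix_inv u *v dx)$\<beta>)"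

text \<open>Exterior derivative of theta^i_j, with d alpha (v,w) = v(alpha(w)) - w(alpha(v)).\<close>
definition dtheta2 :: "'n frame \<Rightarrow> 'n frame \<Rightarrow> 'n frame \<Rightarrow> real^'n^'n" where
  "dtheta2 p v w = pder v (\<lambda>q. theta2 q w) p - pder w (\<lambda>q. theta2 q v) p"

text \<open>Adjoint action of h = [[a,0],[xi,1]] on g = pgl_{n+1}, where (u, A, eta) is the class
  of [[A,u],[eta,0]].\<close>
definition Ad :: "real^'n^'n \<Rightarrow> real^'n \<Rightarrow> 'n galg \<Rightarrow> 'n galg" where
  "Ad a \<xi> X = (case X of (u, A, \<eta>) \<Rightarrow>
     (let c = \<xi> \<bullet> u; ai = matrix_inv a in
      (a *v u,
       a ** A ** ai - (\<chi> i j. (a *v u)$i * (\<xi> v* ai)$j) - c *\<^sub>R mat 1,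
       (\<xi> v* A + \<eta> - c *\<^sub>R \<xi>) v* ai)))"

definition fund :: "'n frame \<Rightarrow> real^'n^'n \<Rightarrow> real^'n \<Rightarrow> 'n frame" where
  "fund p A \<eta> = vector_derivative (\<lambda>t. gact p (hjet (mat 1 + t *\<^sub>R A) (t *\<^sub>R \<eta>))) (at 0)"

definition is_cartan_connection :: "('n::finite) frame set \<Rightarrow> ('n frame \<Rightarrow> 'n frame \<Rightarrow> 'n galg) \<Rightarrow> bool" where
  "is_cartan_connection P \<omega> \<longleftrightarrow>
     (\<forall>p\<in>P. \<exists>V \<alpha>. open V \<and> p \<in> V \<and> (\<forall>q\<in>V. linear (\<alpha> q)) \<and> (\<forall>v. cinf_on (\<lambda>q. \<alpha> q v) V)
              \<and> (\<forall>q\<in>P \<inter> V. \<forall>v\<in>tspace P q. \<omega> q v = \<alpha> q v))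
   \<and> (\<forall>p\<in>P. bij_betw (\<omega> p) (tspace P p) UNIV)
   \<and> (\<forall>p\<in>P. \<forall>A \<eta>. \<omega> p (fund p A \<eta>) = (0, A, \<eta>))
   \<and> (\<forall>p\<in>P. \<forall>a \<xi>. invertible a \<longrightarrow> (\<forall>v\<in>tspace P p.
        \<omega> (gact p (hjet a \<xi>)) (gact v (hjet a \<xi>))
          = Ad (matrix_inv a) (- (\<xi> v* matrix_inv a)) (\<omega> p v)))"

text \<open>Curvature component Omega^i_j = d omega^i_j + omega^i_k ^ omega^k_j + omega^i ^ omega_j
  - delta^i_j omega_k ^ omega^k, for omega^i_j the restriction of theta^i_j
  (so d omega^i_j is the restriction of d theta^i_j); alpha ^ beta (v,w) = alpha(v)beta(w)-alpha(w)beta(v).\<close>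
definition curv :: "(('n::finite) frame \<Rightarrow> 'n frame \<Rightarrow> 'n galg) \<Rightarrow> 'n frame \<Rightarrow> 'n frame \<Rightarrow> 'n frame \<Rightarrow> real^'n^'n" where
  "curv \<omega> p v w =
     (let o1 = (\<lambda>z. fst (\<omega> p z)); o2 = (\<lambda>z. fst (snd (\<omega> p z))); o3 = (\<lambda>z. snd (snd (\<omega> p z))) in
      dtheta2 p v w + (o2 v ** o2 w - o2 w ** o2 v)
      + (\<chi> i j. (o1 v)$i * (o3 w)$j - (o1 w)$i * (o3 v)$j)
      - (o3 v \<bullet> o1 w - o3 w \<bullet> o1 v) *\<^sub>R mat 1)"

definition normal_proj_conn ::
  "('n::finite \<Rightarrow> 'n \<Rightarrow> 'n \<Rightarrow> real^'n \<Rightarrow> real) \<Rightarrow> (real^'n) set \<Rightarrow> ('n frame \<Rightarrow> 'n frame \<Rightarrow> 'n galg) \<Rightarrow> bool" where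
  "normal_proj_conn \<Gamma> U \<omega> \<longleftrightarrow>
     (let P = proj_structure \<Gamma> U in
      is_cartan_connection P \<omega>
      \<and> (\<forall>p\<in>P. \<forall>v\<in>tspace P p. fst (\<omega> p v) = theta1 p v \<and> fst (snd (\<omega> p v)) = theta2 p v)
      \<and> (\<forall>p\<in>P. \<exists>K :: 'n \<Rightarrow> 'n \<Rightarrow> 'n \<Rightarrow> 'n \<Rightarrow> real.
            (\<forall>i j k l. K i j k l = - K i j l k)
          \<and> (\<forall>v\<in>tspace P p. \<forall>w\<in>tspace P p. \<forall>i j.
               curv \<omega> p v w $ i $ j
                 = (\<Sum>k\<in>UNIV. \<Sum>l\<in>UNIV. K i j k l * (fst (\<omega> p v))$k * (fst (\<omega> p w))$l))
          \<and> (\<forall>j l. (\<Sum>i\<in>UNIV. K i j i l) = 0)))"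

definition is_section :: "('n::finite \<Rightarrow> 'n \<Rightarrow> 'n \<Rightarrow> real^'n \<Rightarrow> real) \<Rightarrow> (real^'n) set \<Rightarrow> (real^'n \<Rightarrow> 'n frame) \<Rightarrow> bool" where
  "is_section \<Gamma> U \<sigma> \<longleftrightarrow> cinf_on \<sigma> U \<and> (\<forall>x\<in>U. \<sigma> x \<in> proj_structure \<Gamma> U \<and> fst (\<sigma> x) = x)"

text \<open>Components of pullbacks: sigma^* omega^i = dx^i; sigma^* omega^i_j = Pi^i_{jk} dx^k;
  sigma^* omega_j = Pi_{jk} dx^k.\<close>
definition pb_cond1 :: "(('n::finite) frame \<Rightarrow> 'n frame \<Rightarrow> 'n galg) \<Rightarrow> (real^'n) set \<Rightarrow> (real^'n \<Rightarrow> 'n frame) \<Rightarrow> bool" where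
  "pb_cond1 \<omega> U \<sigma> \<longleftrightarrow> (\<forall>x\<in>U. \<forall>w. fst (\<omega> (\<sigma> x) (frechet_derivative \<sigma> (at x) w)) = w)"

definition Pi_up :: "(('n::finite) frame \<Rightarrow> 'n frame \<Rightarrow> 'n galg) \<Rightarrow> (real^'n \<Rightarrow> 'n frame) \<Rightarrow> 'n \<Rightarrow> 'n \<Rightarrow> 'n \<Rightarrow> real^'n \<Rightarrow> real" where
  "Pi_up \<omega> \<sigma> i j k x = fst (snd (\<omega> (\<sigma> x) (frechet_derivative \<sigma> (at x) (axis k 1)))) $ i $ j"

definition Pi_low :: "(('n::finite) frame \<Rightarrow> 'n frame \<Rightarrow> 'n galg) \<Rightarrow> (real^'n \<Rightarrow> 'n frame) \<Rightarrow> 'n \<Rightarrow> 'n \<Rightarrow> real^'n \<Rightarrow> real" where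
  "Pi_low \<omega> \<sigma> j k x = snd (snd (\<omega> (\<sigma> x) (frechet_derivative \<sigma> (at x) (axis k 1)))) $ j"

definition mu :: "('n::finite \<Rightarrow> 'n \<Rightarrow> 'n \<Rightarrow> real^'n \<Rightarrow> real) \<Rightarrow> 'n \<Rightarrow> real^'n \<Rightarrow> real" where
  "mu \<Gamma> j x = (1/2) * (\<Sum>\<alpha>\<in>UNIV. \<Gamma> \<alpha> \<alpha> j x - \<Gamma> \<alpha> j \<alpha> x)"

definition nu :: "('n::finite \<Rightarrow> 'n \<Rightarrow> 'n \<Rightarrow> real^'n \<Rightarrow> real) \<Rightarrow> 'n \<Rightarrow> real^'n \<Rightarrow> real" where
  "nu \<Gamma> j x = - (1 / (2 * (real CARD('n) + 1))) * (\<Sum>\<alpha>\<in>UNIV. \<Gamma> \<alpha> \<alpha> j x + \<Gamma> \<alpha> j \<alpha> x)"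

definition PiG :: "('n::finite \<Rightarrow> 'n \<Rightarrow> 'n \<Rightarrow> real^'n \<Rightarrow> real) \<Rightarrow> 'n \<Rightarrow> 'n \<Rightarrow> 'n \<Rightarrow> real^'n \<Rightarrow> real" where
  "PiG \<Gamma> i j k x = \<Gamma> i j k x + kd i j * nu \<Gamma> k x + kd i k * nu \<Gamma> j x"

definition PiT :: "('n::finite \<Rightarrow> 'n \<Rightarrow> 'n \<Rightarrow> real^'n \<Rightarrow> real) \<Rightarrow> 'n \<Rightarrow> 'n \<Rightarrow> real^'n \<Rightarrow> real" where
  "PiT \<Gamma> j k x =
     (\<Sum>i\<in>UNIV. pder (axis i 1) (PiG \<Gamma> i j k) x) + pder (axis k 1) (mu \<Gamma> j) x
     - (\<Sum>\<alpha>\<in>UNIV. mu \<Gamma> \<alpha> x * PiG \<Gamma> \<alpha> j k x)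
     - (\<Sum>\<alpha>\<in>UNIV. \<Sum>\<beta>\<in>UNIV. PiG \<Gamma> \<alpha> j \<beta> x * PiG \<Gamma> \<beta> \<alpha> k x)"

definition PiL :: "('n::finite \<Rightarrow> 'n \<Rightarrow> 'n \<Rightarrow> real^'n \<Rightarrow> real) \<Rightarrow> 'n \<Rightarrow> 'n \<Rightarrow> real^'n \<Rightarrow> real" where
  "PiL \<Gamma> j k x = (-1 / ((real CARD('n))\<^sup>2 - 1)) * (real CARD('n) * PiT \<Gamma> j k x + PiT \<Gamma> k j x)"

end

theory Submission
  imports Defs
begin

text \<open>The frames of \<open>P\<close> over \<open>x\<close> with \<open>u\<^sup>i\<^sub>j = \<delta>\<^sup>i\<^sub>j\<close> are exactly
  \<open>(x, 1, -\<Gamma>\<^sup>i\<^sub>j\<^sub>k - \<delta>\<^sup>i\<^sub>j \<xi>\<^sub>k - \<delta>\<^sup>i\<^sub>k \<xi>\<^sub>j)\<close> for a covector \<open>\<xi>\<close>, and since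
  \<open>\<theta>\<^sup>i = (u\<^sup>-\<^sup>1)\<^sup>i\<^sub>j dx\<^sup>j\<close>, the condition \<open>\<sigma>\<^sup>*\<omega>\<^sup>i = dx\<^sup>i\<close> forces a section into such
  frames. Along it \<open>\<Pi>\<^sup>i\<^sub>j\<^sub>k = \<Gamma>\<^sup>i\<^sub>j\<^sub>k + \<delta>\<^sup>i\<^sub>j \<xi>\<^sub>k + \<delta>\<^sup>i\<^sub>k \<xi>\<^sub>j\<close>, whose two traces are
  \<open>\<Gamma>\<^sup>\<alpha>\<^sub>\<alpha>\<^sub>k + (n+1) \<xi>\<^sub>k\<close> and \<open>\<Gamma>\<^sup>\<alpha>\<^sub>k\<^sub>\<alpha> + (n+1) \<xi>\<^sub>k\<close>; so either trace
  condition holds iff \<open>\<xi> = \<nu>\<close>. This gives existence, uniqueness and the formula for \<open>\<Pi>\<^sup>i\<^sub>j\<^sub>k\<close>.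

  For \<open>\<Pi>\<^sub>j\<^sub>k\<close>, evaluate the curvature on the coordinate vector fields of this section:
  the normality condition \<open>K\<^sup>i\<^sub>j\<^sub>i\<^sub>l = 0\<close> becomes the linear system
  \<open>T\<^sub>j\<^sub>l + n \<Pi>\<^sub>j\<^sub>l - \<Pi>\<^sub>l\<^sub>j = 0\<close>, with \<open>T\<close> the bracketed expression of the theorem,
  which is uniquely solvable because \<open>n\<^sup>2 \<noteq> 1\<close>.\<close>

section \<open>Partial derivatives and smoothness\<close>

lemma pder_eq_derivative:
  assumes "(f has_derivative f') (at x)"
  shows "pder b f x = f' b"
proof -
  have "((\<lambda>t. x + t *\<^sub>R b) has_derivative (\<lambda>t. t *\<^sub>R b)) (at 0)"
    by (auto intro!: derivative_eq_intros)
  moreover have "(f has_derivative f') (at (x + 0 *\<^sub>R b))" using assms by simp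
  ultimately have "((\<lambda>t. f (x + t *\<^sub>R b)) has_derivative (\<lambda>t. f' (t *\<^sub>R b))) (at 0)"
    using has_derivative_compose[of "\<lambda>t. x + t *\<^sub>R b" _ 0 UNIV f f'] by (simp add: o_def)
  moreover have "(\<lambda>t. f' (t *\<^sub>R b)) = (\<lambda>t. t *\<^sub>R f' b)"
    using assms has_derivative_linear linear_scale by blast
  ultimately have "((\<lambda>t. f (x + t *\<^sub>R b)) has_vector_derivative f' b) (at 0)"
    by (simp add: has_vector_derivative_def)
  then show ?thesis unfolding pder_def by (rule vector_derivative_at)
qed

lemma pder_eq_frechet_derivative:
  assumes "f differentiable (at x)"
  shows "pder b f x = frechet_derivative f (at x) b"
  using assms by (intro pder_eq_derivative) (simp add: frechet_derivative_works)

lemma pder_cong: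
  fixes f g :: "'a::real_normed_vector \<Rightarrow> 'b::real_normed_vector"
  assumes "open U" "x \<in> U" "\<And>y. y \<in> U \<Longrightarrow> f y = g y"
  shows "pder b f x = pder b g x"
proof -
  have ev: "\<forall>\<^sub>F t in nhds 0. f (x + t *\<^sub>R b) = g (x + t *\<^sub>R b)"
  proof -
    have "((\<lambda>t::real. x + t *\<^sub>R b) \<longlongrightarrow> x + 0 *\<^sub>R b) (nhds 0)"
      by (intro tendsto_intros filterlim_ident)
    then have "\<forall>\<^sub>F t in nhds 0. x + t *\<^sub>R b \<in> U"
      using assms(1,2) by (auto dest: topological_tendstoD)
    then show ?thesis
      by eventually_elim (use assms in auto)
  qed
  have "\<And>D. ((\<lambda>t. f (x + t *\<^sub>R b)) has_vector_derivative D) (at 0) \<longleftrightarrow>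
             ((\<lambda>t. g (x + t *\<^sub>R b)) has_vector_derivative D) (at 0)"
    using has_vector_derivative_cong_ev[where f="\<lambda>t. f (x + t *\<^sub>R b)" and S=UNIV and x=0
        and g="\<lambda>t. g (x + t *\<^sub>R b)"] ev assms
    by (auto simp: eventually_mono)
  then show ?thesis unfolding pder_def vector_derivative_def by simp
qed

lemma pder_sum:
  fixes f :: "'i \<Rightarrow> 'a::real_normed_vector \<Rightarrow> 'b::real_normed_vector"
  assumes "finite S" "\<And>i. i \<in> S \<Longrightarrow> f i differentiable (at x)"
  shows "pder b (\<lambda>y. \<Sum>i\<in>S. f i y) x = (\<Sum>i\<in>S. pder b (f i) x)"
proof -
  have "((\<lambda>y. \<Sum>i\<in>S. f i y) has_derivative (\<lambda>h. \<Sum>i\<in>S. frechet_derivative (f i) (at x) h)) (at x)"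
    by (rule has_derivative_sum) (use assms(2) in \<open>simp add: frechet_derivative_works[symmetric]\<close>)
  then have "pder b (\<lambda>y. \<Sum>i\<in>S. f i y) x = (\<Sum>i\<in>S. frechet_derivative (f i) (at x) b)"
    by (simp add: pder_eq_derivative)
  also have "\<dots> = (\<Sum>i\<in>S. pder b (f i) x)"
    by (rule sum.cong) (simp_all add: pder_eq_frechet_derivative assms(2))
  finally show ?thesis .
qed

lemma pder_minus:
  fixes f :: "'a::real_normed_vector \<Rightarrow> 'b::real_normed_vector"
  assumes "f differentiable (at x)"
  shows "pder b (\<lambda>y. - f y) x = - pder b f x"
proof -
  have "((\<lambda>y. - f y) has_derivative (\<lambda>h. - frechet_derivative f (at x) h)) (at x)"
    by (rule has_derivative_minus) (use assms in \<open>simp add: frechet_derivative_works[symmetric]\<close>)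
  then show ?thesis using pder_eq_frechet_derivative[OF assms] by (simp add: pder_eq_derivative)
qed

lemma cdiff_cong:
  assumes "open U" "\<And>y. y \<in> U \<Longrightarrow> f y = g y" "cdiff k f U"
  shows "cdiff k g U"
  using assms(2,3)
proof (induction k arbitrary: f g)
  case 0
  then show ?case using continuous_on_cong by fastforce
next
  case (Suc k)
  have g_differentiable: "g differentiable (at y)" if "y \<in> U" for y
  proof -
    have "f differentiable (at y)" using Suc.prems that by auto
    then obtain f' where "(f has_derivative f') (at y)" by (auto simp: differentiable_def)
    then have "(g has_derivative f') (at y)"
      by (rule has_derivative_transform_within_open[OF _ assms(1) that]) (use Suc.prems in auto)
    then show ?thesis by (auto simp: differentiable_def)
  qed
  have "cdiff k (pder b g) U" if "b \<in> Basis" for b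
  proof (rule Suc.IH[of "pder b f"])
    show "pder b f y = pder b g y" if "y \<in> U" for y
      by (rule pder_cong[OF assms(1) that]) (use Suc.prems in auto)
  qed (use Suc.prems that in auto)
  then show ?case using g_differentiable by simp
qed

lemma cdiff_const: "open U \<Longrightarrow> cdiff k (\<lambda>x. c) U"
proof (induction k arbitrary: c)
  case 0 then show ?case by simp
next
  case (Suc k)
  have "cdiff k (pder b (\<lambda>x. c)) U" for b
    by (rule cdiff_cong[OF Suc.prems _ Suc.IH[OF Suc.prems, of 0]])
       (simp add: pder_eq_derivative[OF has_derivative_const])
  then show ?case by simp
qed

lemma cdiff_add:
  assumes "open U" "cdiff k f U" "cdiff k g U"
  shows "cdiff k (\<lambda>x. f x + g x) U"
  using assms(2,3)
proof (induction k arbitrary: f g)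
  case 0 then show ?case by (simp add: continuous_on_add)
next
  case (Suc k)
  have pder_add: "pder b (\<lambda>x. f x + g x) y = pder b f y + pder b g y" if "y \<in> U" for y b
  proof -
    have "f differentiable (at y)" "g differentiable (at y)" using Suc.prems that by auto
    then have "((\<lambda>x. f x + g x) has_derivative (\<lambda>h. frechet_derivative f (at y) h + frechet_derivative g (at y) h)) (at y)"
      by (intro has_derivative_add) (simp_all add: frechet_derivative_works[symmetric])
    then show ?thesis
      using pder_eq_frechet_derivative[OF \<open>f differentiable (at y)\<close>] pder_eq_frechet_derivative[OF \<open>g differentiable (at y)\<close>]
      by (simp add: pder_eq_derivative)
  qed
  have "cdiff k (pder b (\<lambda>x. f x + g x)) U" if "b \<in> Basis" for b
    by (rule cdiff_cong[OF assms(1), of "\<lambda>y. pder b f y + pder b g y"])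
       (use pder_add Suc that in auto)
  then show ?case using Suc.prems by auto
qed

lemma cdiff_bounded_linear_comp:
  assumes "open U" "bounded_linear L" "cdiff k f U"
  shows "cdiff k (\<lambda>x. L (f x)) U"
  using assms(3)
proof (induction k arbitrary: f)
  case 0 then show ?case
    using continuous_on_compose[of U f L] linear_continuous_on[OF assms(2)] by (simp add: o_def)
next
  case (Suc k)
  have deriv: "((\<lambda>x. L (f x)) has_derivative (\<lambda>h. L (frechet_derivative f (at y) h))) (at y)"
    if "y \<in> U" for y
    using Suc.prems that
    by (intro bounded_linear.has_derivative[OF assms(2)]) (simp add: frechet_derivative_works[symmetric])
  have pder_comp: "pder b (\<lambda>x. L (f x)) y = L (pder b f y)" if "y \<in> U" for y b
    using deriv[OF that] Suc.prems that by (simp add: pder_eq_derivative pder_eq_frechet_derivative)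
  have "cdiff k (pder b (\<lambda>x. L (f x))) U" if "b \<in> Basis" for b
    by (rule cdiff_cong[OF assms(1), of "\<lambda>y. L (pder b f y)"])
       (use pder_comp Suc that in auto)
  moreover have "(\<lambda>x. L (f x)) differentiable (at y)" if "y \<in> U" for y
    using deriv[OF that] by (auto simp: differentiable_def)
  ultimately show ?case by auto
qed

lemma cdiff_mult_left: "open U \<Longrightarrow> cdiff k f U \<Longrightarrow> cdiff k (\<lambda>x. c * f x :: real) U"
  by (rule cdiff_bounded_linear_comp[where L="\<lambda>r. c * r"]) (auto intro: bounded_linear_mult_right)

lemma cdiff_diff: "open U \<Longrightarrow> cdiff k f U \<Longrightarrow> cdiff k g U \<Longrightarrow> cdiff k (\<lambda>x. f x - g x :: real) U"
  using cdiff_add[of U k f "\<lambda>x. (-1) * g x"] cdiff_mult_left[of U k g "-1"] by simp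

lemma cdiff_bounded_linear:
  assumes "open U" "bounded_linear L"
  shows "cdiff k L U"
proof (cases k)
  case 0 then show ?thesis using linear_continuous_on[OF assms(2)] by simp
next
  case (Suc m)
  have "cdiff m (pder b L) U" for b
    by (rule cdiff_cong[OF assms(1) _ cdiff_const[OF assms(1), of m "L b"]])
       (simp add: pder_eq_derivative[OF bounded_linear.has_derivative[OF assms(2) has_derivative_ident]])
  moreover have "L differentiable (at y)" for y
    using assms(2) bounded_linear_imp_differentiable by blast
  ultimately show ?thesis using Suc by simp
qed

lemma cdiff_sum:
  assumes "open U" "finite S" "\<And>i. i \<in> S \<Longrightarrow> cdiff k (f i) U"
  shows "cdiff k (\<lambda>x. \<Sum>i\<in>S. f i x) U"
  using assms(2,3)
proof (induction S rule: finite_induct)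
  case empty then show ?case using cdiff_const[OF assms(1)] by simp
next
  case (insert a S)
  then show ?case by (simp add: cdiff_add[OF assms(1)])
qed

lemma bounded_linear_axis: "bounded_linear (axis i :: 'b::euclidean_space \<Rightarrow> 'b^'n)"
proof -
  have "linear (axis i :: 'b::euclidean_space \<Rightarrow> 'b^'n)"
    by (rule linearI) (auto simp: axis_def vec_eq_iff)
  then show ?thesis by (simp add: linear_conv_bounded_linear)
qed

lemma vec_lambda_eq_sum_axis: "(\<chi> i. F i) = (\<Sum>i\<in>UNIV. axis i (F i))"
  by (simp add: vec_eq_iff axis_def)

lemma cdiff_vec_lambda:
  fixes f :: "'n::finite \<Rightarrow> 'a::euclidean_space \<Rightarrow> 'b::euclidean_space"
  assumes "open U" "\<And>i. cdiff k (f i) U"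
  shows "cdiff k (\<lambda>x. \<chi> i. f i x) U"
  unfolding vec_lambda_eq_sum_axis
  by (rule cdiff_sum[OF assms(1)]) (auto intro!: cdiff_bounded_linear_comp[OF assms(1) bounded_linear_axis assms(2)])

lemma cinf_on_imp_differentiable: "cinf_on f U \<Longrightarrow> x \<in> U \<Longrightarrow> f differentiable (at x)"
  unfolding cinf_on_def by (metis cdiff.simps(2))

lemma frechet_derivative_in_tspace:
  fixes \<sigma> :: "'a::euclidean_space \<Rightarrow> 'b::real_normed_vector"
  assumes "open U" "x \<in> U" "\<sigma> differentiable (at x)" "\<And>y. y \<in> U \<Longrightarrow> \<sigma> y \<in> S"
  shows "frechet_derivative \<sigma> (at x) w \<in> tspace S (\<sigma> x)"
proof (cases "w = 0")
  case True
  then have "frechet_derivative \<sigma> (at x) w = 0"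
    using assms(3) linear_frechet_derivative linear_0 by blast
  then show ?thesis
    unfolding tspace_def by (intro CollectI exI[of _ "\<lambda>t. \<sigma> x"]) (auto simp: assms)
next
  case False
  obtain e where e: "e > 0" "ball x e \<subseteq> U"
    using assms(1,2) open_contains_ball by blast
  define s where "s = e / (2 * norm w)"
  have s: "s > 0"
    using e False by (simp add: s_def)
  \<comment> \<open>\<open>tspace\<close> wants curves defined on all of \<open>\<real>\<close>: bend the line \<open>x + t w\<close> so it stays in \<open>U\<close>\<close>
  define \<phi> where "\<phi> t = s * sin (t / s)" for t
  have in_U: "x + \<phi> t *\<^sub>R w \<in> U" for t
  proof -
    have "\<bar>\<phi> t\<bar> \<le> s"
      using s by (simp add: \<phi>_def abs_mult)
    then have "norm (\<phi> t *\<^sub>R w) \<le> s * norm w"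
      by (simp add: mult_right_mono)
    also have "\<dots> < e"
      using e False by (simp add: s_def)
    finally show ?thesis
      using e by (auto simp: dist_norm)
  qed
  have "(\<phi> has_real_derivative s * (cos (0 / s) * (1 / s))) (at 0)"
    unfolding \<phi>_def by (auto intro!: derivative_eq_intros)
  then have "((\<lambda>t. x + \<phi> t *\<^sub>R w) has_vector_derivative w) (at 0)"
    using s by (auto intro!: derivative_eq_intros simp: has_real_derivative_iff_has_vector_derivative)
  moreover have "\<phi> 0 = 0"
    by (simp add: \<phi>_def)
  moreover have "(\<sigma> has_derivative frechet_derivative \<sigma> (at x)) (at x)"
    using assms(3) frechet_derivative_works by blast
  ultimately have "((\<sigma> \<circ> (\<lambda>t. x + \<phi> t *\<^sub>R w)) has_vector_derivative frechet_derivative \<sigma> (at x) w) (at 0)"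
    using vector_derivative_diff_chain_within[of "\<lambda>t. x + \<phi> t *\<^sub>R w" w 0 UNIV \<sigma>]
    by (simp add: has_derivative_at_withinI)
  then show ?thesis
    unfolding tspace_def using in_U assms(4) \<open>\<phi> 0 = 0\<close>
    by (intro CollectI exI[of _ "\<sigma> \<circ> (\<lambda>t. x + \<phi> t *\<^sub>R w)"]) auto
qed

lemma bounded_linear_frechet_derivative_eq:
  assumes "open U" "x \<in> U" "\<sigma> differentiable (at x)" "bounded_linear L"
    "(g has_derivative g') (at x)" "\<And>y. y \<in> U \<Longrightarrow> L (\<sigma> y) = g y"
  shows "L (frechet_derivative \<sigma> (at x) w) = g' w"
proof -
  have "((\<lambda>y. L (\<sigma> y)) has_derivative (\<lambda>h. L (frechet_derivative \<sigma> (at x) h))) (at x)"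
    using assms(3) by (intro bounded_linear.has_derivative[OF assms(4)]) (simp add: frechet_derivative_works[symmetric])
  then have "(g has_derivative (\<lambda>h. L (frechet_derivative \<sigma> (at x) h))) (at x)"
    by (rule has_derivative_transform_within_open[OF _ assms(1,2)]) (use assms(6) in auto)
  from has_derivative_unique[OF this assms(5)] show ?thesis
    by metis
qed

lemma frechet_derivative_fst_eq:
  assumes "open U" "x \<in> U" "\<sigma> differentiable (at x)" "\<And>y. y \<in> U \<Longrightarrow> fst (\<sigma> y) = y"
  shows "fst (frechet_derivative \<sigma> (at x) w) = w"
  using bounded_linear_frechet_derivative_eq[OF assms(1-3) bounded_linear_fst has_derivative_ident] assms(4)
  by auto

lemma frechet_derivative_fst_snd_eq_0:
  assumes "open U" "x \<in> U" "\<sigma> differentiable (at x)" "\<And>y. y \<in> U \<Longrightarrow> fst (snd (\<sigma> y)) = c"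
  shows "fst (snd (frechet_derivative \<sigma> (at x) w)) = 0"
proof -
  have "bounded_linear (\<lambda>p. fst (snd p))"
    using bounded_linear_compose[OF bounded_linear_fst bounded_linear_snd] by (simp add: o_def)
  from bounded_linear_frechet_derivative_eq[OF assms(1-3) this has_derivative_const] assms(4)
  show ?thesis
    by auto
qed

section \<open>Index calculus and the projective change of a connection\<close>

lemma sum_kd [simp]:
  fixes f :: "'n::finite \<Rightarrow> real"
  shows "(\<Sum>l\<in>UNIV. kd i l * f l) = f i" and "(\<Sum>l\<in>UNIV. kd l i * f l) = f i"
    and "(\<Sum>l\<in>UNIV. f l * kd i l) = f i" and "(\<Sum>l\<in>UNIV. f l * kd l i) = f i"
  by (simp_all add: kd_def if_distrib if_distribR cong: if_cong)

lemma sum_kd_diag: "(\<Sum>l\<in>UNIV. kd l (l::'n::finite) * c) = real CARD('n) * c"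
  by (simp add: kd_def)

lemma mat_1_nth: "(mat 1 :: real^'n^'n) $ i $ j = kd i j"
  by (simp add: mat_def kd_def)

lemma axis_1_nth: "axis k (1::real) $ i = kd i k"
  by (simp add: axis_def kd_def)

lemma matrix_mul_matrix_inv: "invertible (a::real^'n^'n) \<Longrightarrow> a ** matrix_inv a = mat 1"
  unfolding invertible_def matrix_inv_def by (rule someI_ex[THEN conjunct1])

lemma invertible_mat_1: "invertible (mat 1 :: real^'n^'n)"
  unfolding invertible_def by (intro exI[of _ "mat 1"]) simp

lemma matrix_inv_mat_1: "matrix_inv (mat 1 :: real^'n^'n) = mat 1"
  using matrix_mul_matrix_inv[OF invertible_mat_1] by simp

type_synonym 'n christoffel = "'n \<Rightarrow> 'n \<Rightarrow> 'n \<Rightarrow> real^'n \<Rightarrow> real"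

definition proj_change :: "('n::finite) christoffel \<Rightarrow> real^'n \<Rightarrow> 'n christoffel"
  where "proj_change \<Gamma> \<xi> i j k x = \<Gamma> i j k x + kd i j * \<xi>$k + kd i k * \<xi>$j"

lemma PiG_eq_proj_change: "PiG \<Gamma> i j k x = proj_change \<Gamma> (\<chi> k. nu \<Gamma> k x) i j k x"
  by (simp add: PiG_def proj_change_def)

lemma nu_mult_eq_traces:
  "(real CARD('n) + 1) * nu \<Gamma> k x = - ((\<Sum>\<alpha>\<in>UNIV. \<Gamma> \<alpha> \<alpha> k x) + (\<Sum>\<alpha>\<in>UNIV. \<Gamma> \<alpha> k \<alpha> x)) / 2"
  for \<Gamma> :: "('n::finite) christoffel"
  by (simp add: nu_def sum.distrib field_simps)

lemma mu_eq_traces: "mu \<Gamma> k x = ((\<Sum>\<alpha>\<in>UNIV. \<Gamma> \<alpha> \<alpha> k x) - (\<Sum>\<alpha>\<in>UNIV. \<Gamma> \<alpha> k \<alpha> x)) / 2"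
  by (simp add: mu_def sum_subtractf)

lemma trace_proj_change_eq_mu_iff:
  fixes \<Gamma> :: "('n::finite) christoffel"
  shows "(\<Sum>i\<in>UNIV. proj_change \<Gamma> \<xi> i i k x) = mu \<Gamma> k x \<longleftrightarrow> \<xi>$k = nu \<Gamma> k x"
proof -
  have "(\<Sum>i\<in>UNIV. proj_change \<Gamma> \<xi> i i k x) = (\<Sum>\<alpha>\<in>UNIV. \<Gamma> \<alpha> \<alpha> k x) + (real CARD('n) + 1) * \<xi>$k"
    by (simp add: proj_change_def sum.distrib sum_kd_diag algebra_simps)
  then have "(\<Sum>i\<in>UNIV. proj_change \<Gamma> \<xi> i i k x) = mu \<Gamma> k x \<longleftrightarrow>
      (real CARD('n) + 1) * \<xi>$k = (real CARD('n) + 1) * nu \<Gamma> k x"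
    using nu_mult_eq_traces[of \<Gamma> k x] mu_eq_traces[of \<Gamma> k x] by argo
  also have "\<dots> \<longleftrightarrow> \<xi>$k = nu \<Gamma> k x"
    by (simp add: add_nonneg_eq_0_iff)
  finally show ?thesis .
qed

lemma trace_proj_change_eq_minus_mu_iff:
  fixes \<Gamma> :: "('n::finite) christoffel"
  shows "(\<Sum>i\<in>UNIV. proj_change \<Gamma> \<xi> i j i x) = - mu \<Gamma> j x \<longleftrightarrow> \<xi>$j = nu \<Gamma> j x"
proof -
  have "(\<Sum>i\<in>UNIV. proj_change \<Gamma> \<xi> i j i x) = (\<Sum>\<alpha>\<in>UNIV. \<Gamma> \<alpha> j \<alpha> x) + (real CARD('n) + 1) * \<xi>$j"
    by (simp add: proj_change_def sum.distrib sum_kd_diag algebra_simps)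
  then have "(\<Sum>i\<in>UNIV. proj_change \<Gamma> \<xi> i j i x) = - mu \<Gamma> j x \<longleftrightarrow>
      (real CARD('n) + 1) * \<xi>$j = (real CARD('n) + 1) * nu \<Gamma> j x"
    using nu_mult_eq_traces[of \<Gamma> j x] mu_eq_traces[of \<Gamma> j x] by argo
  also have "\<dots> \<longleftrightarrow> \<xi>$j = nu \<Gamma> j x"
    by (simp add: add_nonneg_eq_0_iff)
  finally show ?thesis .
qed

lemma trace_PiG: "(\<Sum>i\<in>UNIV. PiG \<Gamma> i i k x) = mu \<Gamma> k x"
  by (simp add: PiG_eq_proj_change trace_proj_change_eq_mu_iff)

lemma trace_PiG': "(\<Sum>i\<in>UNIV. PiG \<Gamma> i j i x) = - mu \<Gamma> j x"
  by (simp add: PiG_eq_proj_change trace_proj_change_eq_minus_mu_iff)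

lemma linear_transpose_system_solution:
  fixes T X :: "'n \<Rightarrow> 'n \<Rightarrow> real"
  assumes "N\<^sup>2 \<noteq> 1" "\<And>j l. T j l + N * X j l - X l j = 0"
  shows "X j l = (-1 / (N\<^sup>2 - 1)) * (N * T j l + T l j)"
proof -
  have "N * (T j l + N * X j l - X l j) + (T l j + N * X l j - X j l) = 0"
    using assms(2) by simp
  then have "(N\<^sup>2 - 1) * X j l = - (N * T j l + T l j)"
    by (simp add: power2_eq_square algebra_simps)
  moreover have "N\<^sup>2 - 1 \<noteq> 0"
    using assms(1) by simp
  ultimately show ?thesis
    by (simp add: field_simps)
qed

section \<open>Adapted frames and the canonical section\<close>

lemma theta1_eq: "theta1 p v = matrix_inv (fst (snd p)) *v fst v"
  by (cases p; cases v) auto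

lemma theta2_identity_frame:
  "theta2 (x, mat 1, u2) v = fst (snd v) - (\<chi> i j. \<Sum>\<beta>\<in>UNIV. u2$i$j$\<beta> * fst v $ \<beta>)"
  by (cases v) (simp add: matrix_inv_mat_1 mat_1_nth vec_eq_iff mult.assoc sum_distrib_left[symmetric])

lemma curv_nth:
  assumes "\<omega> p v = (a, A, \<eta>)" "\<omega> p w = (b, B, \<zeta>)"
  shows "curv \<omega> p v w $ i $ j = dtheta2 p v w $ i $ j
     + (\<Sum>m\<in>UNIV. A$i$m * B$m$j) - (\<Sum>m\<in>UNIV. B$i$m * A$m$j)
     + (a$i * \<zeta>$j - b$i * \<eta>$j) - ((\<Sum>m\<in>UNIV. \<eta>$m * b$m) - (\<Sum>m\<in>UNIV. \<zeta>$m * a$m)) * kd i j"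
  using assms by (simp add: curv_def Let_def matrix_matrix_mult_def inner_vec_def mat_1_nth)

lemma Pi_low_cong:
  assumes "open U" "x \<in> U" "\<tau> differentiable (at x)" "\<And>y. y \<in> U \<Longrightarrow> \<sigma> y = \<tau> y"
  shows "Pi_low \<omega> \<sigma> j k x = Pi_low \<omega> \<tau> j k x"
proof -
  have "frechet_derivative \<tau> (at x) = frechet_derivative \<sigma> (at x)"
    using frechet_derivative_transform_within_open[OF assms(3,1,2)] assms(4) by metis
  then show ?thesis
    unfolding Pi_low_def using assms(2,4) by simp
qed

lemma gact_hjet:
  "gact (x, mat 1, \<chi> i j k. - \<Gamma> i j k x) (hjet a \<xi>) =
    (x, a, \<chi> i j k. - (\<Sum>l\<in>UNIV. \<Sum>m\<in>UNIV. \<Gamma> i l m x * a$l$j * a$m$k) - (a$i$j * \<xi>$k + \<xi>$j * a$i$k))"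
  by (simp add: hjet_def mat_1_nth vec_eq_iff sum_negf sum_subtractf sum.distrib ring_distribs)

definition adapted_frame :: "('n::finite) christoffel \<Rightarrow> real^'n \<Rightarrow> real^'n \<Rightarrow> 'n frame"
  where "adapted_frame \<Gamma> \<xi> x = (x, mat 1, \<chi> i j k. - proj_change \<Gamma> \<xi> i j k x)"

definition canonical_section :: "('n::finite) christoffel \<Rightarrow> real^'n \<Rightarrow> 'n frame"
  where "canonical_section \<Gamma> x = adapted_frame \<Gamma> (\<chi> k. nu \<Gamma> k x) x"

lemma canonical_section_eq: "canonical_section \<Gamma> x = (x, mat 1, \<chi> i j k. - PiG \<Gamma> i j k x)"
  by (simp add: canonical_section_def adapted_frame_def PiG_eq_proj_change)

lemma adapted_frame_in_proj_structure:
  assumes "x \<in> U"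
  shows "adapted_frame \<Gamma> \<xi> x \<in> proj_structure \<Gamma> U"
proof -
  have "adapted_frame \<Gamma> \<xi> x = gact (x, mat 1, \<chi> i j k. - \<Gamma> i j k x) (hjet (mat 1) \<xi>)"
    unfolding gact_hjet
    by (simp add: adapted_frame_def proj_change_def mat_1_nth vec_eq_iff)
  then show ?thesis
    unfolding proj_structure_def using assms invertible_mat_1 by blast
qed

lemma proj_structure_elem:
  assumes "p \<in> proj_structure \<Gamma> U"
  obtains x a \<xi> where "x \<in> U" "invertible a"
    "p = (x, a, \<chi> i j k. - (\<Sum>l\<in>UNIV. \<Sum>m\<in>UNIV. \<Gamma> i l m x * a$l$j * a$m$k) - (a$i$j * \<xi>$k + \<xi>$j * a$i$k))"
  using assms unfolding proj_structure_def gact_hjet by auto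

lemma proj_structure_identity_frame:
  assumes "p \<in> proj_structure \<Gamma> U" "fst (snd p) = mat 1"
  obtains \<xi> where "p = adapted_frame \<Gamma> \<xi> (fst p)"
proof -
  obtain x a \<xi> where p: "p = (x, a, \<chi> i j k. - (\<Sum>l\<in>UNIV. \<Sum>m\<in>UNIV. \<Gamma> i l m x * a$l$j * a$m$k) - (a$i$j * \<xi>$k + \<xi>$j * a$i$k))"
    using proj_structure_elem[OF assms(1)] by blast
  moreover have "a = mat 1"
    using assms(2) p by simp
  ultimately have "p = adapted_frame \<Gamma> \<xi> (fst p)"
    by (simp add: adapted_frame_def proj_change_def mat_1_nth vec_eq_iff mult.commute)
  then show ?thesis ..
qed

locale smooth_christoffel_chart =
  fixes \<Gamma> :: "('n::finite) christoffel" and U :: "(real^'n) set"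
  assumes open_U: "open U" and smooth_Gamma: "\<forall>i j k. cinf_on (\<Gamma> i j k) U"
begin

lemma cdiff_Gamma: "cdiff m (\<Gamma> i j k) U"
  using smooth_Gamma by (simp add: cinf_on_def)

lemma cdiff_nu: "cdiff m (nu \<Gamma> j) U"
proof -
  have eq: "nu \<Gamma> j = (\<lambda>x. (- (1 / (2 * (real CARD('n) + 1)))) * (\<Sum>\<alpha>\<in>UNIV. \<Gamma> \<alpha> \<alpha> j x + \<Gamma> \<alpha> j \<alpha> x))"
    by (rule ext) (simp add: nu_def)
  show ?thesis
    unfolding eq by (intro cdiff_mult_left cdiff_sum cdiff_add open_U cdiff_Gamma) auto
qed

lemma cdiff_mu: "cdiff m (mu \<Gamma> j) U"
proof -
  have eq: "mu \<Gamma> j = (\<lambda>x. (1/2) * (\<Sum>\<alpha>\<in>UNIV. \<Gamma> \<alpha> \<alpha> j x - \<Gamma> \<alpha> j \<alpha> x))"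
    by (rule ext) (simp add: mu_def)
  show ?thesis
    unfolding eq by (intro cdiff_mult_left cdiff_sum cdiff_diff open_U cdiff_Gamma) auto
qed

lemma cdiff_PiG: "cdiff m (PiG \<Gamma> i j k) U"
proof -
  have eq: "PiG \<Gamma> i j k = (\<lambda>x. \<Gamma> i j k x + kd i j * nu \<Gamma> k x + kd i k * nu \<Gamma> j x)"
    by (rule ext) (simp add: PiG_def)
  show ?thesis
    unfolding eq by (intro cdiff_mult_left cdiff_add open_U cdiff_Gamma cdiff_nu)
qed

lemma PiG_differentiable: "x \<in> U \<Longrightarrow> PiG \<Gamma> i j k differentiable (at x)"
  using cdiff_PiG[of "Suc 0"] by auto

lemma mu_differentiable: "x \<in> U \<Longrightarrow> mu \<Gamma> j differentiable (at x)"
  using cdiff_mu[of "Suc 0"] by auto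

lemma cinf_on_canonical_section: "cinf_on (canonical_section \<Gamma>) U"
  unfolding cinf_on_def
proof
  fix m
  have eq: "canonical_section \<Gamma> =
      (\<lambda>x. (\<lambda>v. (v, 0, 0)) x + ((0, mat 1, 0) + (\<lambda>w. (0, 0, w)) (\<chi> i j k. - PiG \<Gamma> i j k x)))"
    by (rule ext) (simp add: canonical_section_eq)
  have lin_base: "bounded_linear (\<lambda>v::real^'n. (v, 0::real^'n^'n, 0::real^'n^'n^'n))"
    and lin_jet: "bounded_linear (\<lambda>w::real^'n^'n^'n. (0::real^'n, 0::real^'n^'n, w))"
    by (intro bounded_linear_Pair bounded_linear_ident bounded_linear_zero)+
  have "cdiff m (\<lambda>x. \<chi> i j k. - PiG \<Gamma> i j k x) U"
    by (intro cdiff_vec_lambda open_U cdiff_mult_left[where c="-1", simplified] cdiff_PiG)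
  then show "cdiff m (canonical_section \<Gamma>) U"
    unfolding eq
    by (intro cdiff_add open_U cdiff_const cdiff_bounded_linear_comp[OF open_U lin_jet]
        cdiff_bounded_linear[OF open_U lin_base])
qed

lemma is_section_canonical_section: "is_section \<Gamma> U (canonical_section \<Gamma>)"
  unfolding is_section_def
proof (intro conjI ballI cinf_on_canonical_section)
  fix x
  assume "x \<in> U"
  then show "canonical_section \<Gamma> x \<in> proj_structure \<Gamma> U"
    by (simp add: canonical_section_def adapted_frame_in_proj_structure)
  show "fst (canonical_section \<Gamma> x) = x"
    by (simp add: canonical_section_eq)
qed

lemma frechet_derivative_canonical_section:
  assumes "x \<in> U"
  shows "fst (frechet_derivative (canonical_section \<Gamma>) (at x) w) = w"
    and "fst (snd (frechet_derivative (canonical_section \<Gamma>) (at x) w)) = 0"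
    and "snd (snd (frechet_derivative (canonical_section \<Gamma>) (at x) (axis k 1))) $ i $ j $ l
           = - pder (axis k 1) (PiG \<Gamma> i j l) x"
proof -
  have diff: "canonical_section \<Gamma> differentiable (at x)"
    using cinf_on_canonical_section assms by (rule cinf_on_imp_differentiable)
  show "fst (frechet_derivative (canonical_section \<Gamma>) (at x) w) = w"
    by (rule frechet_derivative_fst_eq[OF open_U assms diff]) (simp add: canonical_section_eq)
  show "fst (snd (frechet_derivative (canonical_section \<Gamma>) (at x) w)) = 0"
    by (rule frechet_derivative_fst_snd_eq_0[OF open_U assms diff]) (simp add: canonical_section_eq)
  obtain F where F: "(PiG \<Gamma> i j l has_derivative F) (at x)"
    using PiG_differentiable[OF assms, of i j l] unfolding differentiable_def by blast
  have "bounded_linear (\<lambda>q::'n frame. snd (snd q) $ i $ j $ l)"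
    by (simp add: linear_conv_bounded_linear[symmetric] linearI)
  then have "snd (snd (frechet_derivative (canonical_section \<Gamma>) (at x) (axis k 1))) $ i $ j $ l = - F (axis k 1)"
    by (rule bounded_linear_frechet_derivative_eq[OF open_U assms diff, where g="\<lambda>y. - PiG \<Gamma> i j l y"])
       (auto simp: canonical_section_eq intro!: has_derivative_minus F)
  then show "snd (snd (frechet_derivative (canonical_section \<Gamma>) (at x) (axis k 1))) $ i $ j $ l
           = - pder (axis k 1) (PiG \<Gamma> i j l) x"
    using pder_eq_derivative[OF F] by simp
qed

lemma pder_theta2_canonical_section:
  assumes "x \<in> U"
  defines "v \<equiv> \<lambda>k. frechet_derivative (canonical_section \<Gamma>) (at x) (axis k 1)"
  shows "pder (v k) (\<lambda>q. theta2 q (v l)) (canonical_section \<Gamma> x) = (\<chi> i j. pder (axis k 1) (PiG \<Gamma> i j l) x)"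
proof -
  have vk: "fst (snd (v k)) = 0" "snd (snd (v k)) $ i $ j $ b = - pder (axis k 1) (PiG \<Gamma> i j b) x"
    for i j b
    unfolding v_def by (simp_all add: frechet_derivative_canonical_section assms(1))
  have vl: "fst (v l) = axis l 1" "fst (snd (v l)) = 0"
    unfolding v_def by (simp_all add: frechet_derivative_canonical_section assms(1))
  define d where "d = (\<chi> i j. pder (axis k 1) (PiG \<Gamma> i j l) x)"
  \<comment> \<open>along the straight line through the frame in direction \<open>v k\<close>, \<open>\<theta>\<^sup>i\<^sub>j(v l)\<close> is affine in \<open>t\<close>\<close>
  have "theta2 (canonical_section \<Gamma> x + t *\<^sub>R v k) (v l) = (\<chi> i j. PiG \<Gamma> i j l x) + t *\<^sub>R d" for t
  proof -
    have "canonical_section \<Gamma> x + t *\<^sub>R v k =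
        (x + t *\<^sub>R fst (v k), mat 1, (\<chi> i j l. - PiG \<Gamma> i j l x) + t *\<^sub>R snd (snd (v k)))"
      using vk(1) by (simp add: canonical_section_eq prod_eq_iff)
    then show ?thesis
      using vl by (simp add: theta2_identity_frame d_def vk(2) vec_eq_iff axis_1_nth)
  qed
  then have "((\<lambda>t. theta2 (canonical_section \<Gamma> x + t *\<^sub>R v k) (v l)) has_vector_derivative d) (at 0)"
    by (auto intro!: derivative_eq_intros)
  then show ?thesis
    unfolding pder_def d_def by (rule vector_derivative_at)
qed

end

section \<open>Sections of the normal projective connection\<close>

locale normal_projective_chart = smooth_christoffel_chart \<Gamma> U
  for \<Gamma> :: "('n::finite) christoffel" and U +
  fixes \<omega> :: "'n frame \<Rightarrow> 'n frame \<Rightarrow> 'n galg"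
  assumes normal: "normal_proj_conn \<Gamma> U \<omega>"
begin

abbreviation "P \<equiv> proj_structure \<Gamma> U"

lemma omega_eq_theta:
  assumes "p \<in> P" "v \<in> tspace P p"
  shows "fst (\<omega> p v) = theta1 p v" and "fst (snd (\<omega> p v)) = theta2 p v"
  using normal assms unfolding normal_proj_conn_def Let_def by blast+

lemma omega_pullback_identity_frame:
  assumes "cinf_on \<sigma> U" "\<forall>y\<in>U. \<sigma> y \<in> P" "\<forall>y\<in>U. fst (\<sigma> y) = y"
    "\<forall>y\<in>U. fst (snd (\<sigma> y)) = mat 1" "x \<in> U"
  shows "frechet_derivative \<sigma> (at x) w \<in> tspace P (\<sigma> x)"
    and "fst (\<omega> (\<sigma> x) (frechet_derivative \<sigma> (at x) w)) = w"
    and "fst (snd (\<omega> (\<sigma> x) (frechet_derivative \<sigma> (at x) w))) =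
          (\<chi> i j. - (\<Sum>\<beta>\<in>UNIV. snd (snd (\<sigma> x)) $ i $ j $ \<beta> * w $ \<beta>))"
proof -
  have diff: "\<sigma> differentiable (at x)"
    using assms(1,5) by (rule cinf_on_imp_differentiable)
  show tangent: "frechet_derivative \<sigma> (at x) w \<in> tspace P (\<sigma> x)"
    using frechet_derivative_in_tspace[OF open_U assms(5) diff] assms(2) by blast
  have base: "fst (frechet_derivative \<sigma> (at x) w) = w"
    using frechet_derivative_fst_eq[OF open_U assms(5) diff] assms(3) by blast
  have frame: "fst (snd (frechet_derivative \<sigma> (at x) w)) = 0"
    using frechet_derivative_fst_snd_eq_0[OF open_U assms(5) diff] assms(4) by blast
  obtain u2 where \<sigma>x: "\<sigma> x = (x, mat 1, u2)"
    using assms(3-5) by (metis prod.collapse)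
  show "fst (\<omega> (\<sigma> x) (frechet_derivative \<sigma> (at x) w)) = w"
    using omega_eq_theta(1)[OF assms(2)[rule_format, OF assms(5)] tangent] base
    by (simp add: theta1_eq \<sigma>x matrix_inv_mat_1)
  show "fst (snd (\<omega> (\<sigma> x) (frechet_derivative \<sigma> (at x) w))) =
          (\<chi> i j. - (\<Sum>\<beta>\<in>UNIV. snd (snd (\<sigma> x)) $ i $ j $ \<beta> * w $ \<beta>))"
    using omega_eq_theta(2)[OF assms(2)[rule_format, OF assms(5)] tangent] base frame
    by (simp add: \<sigma>x theta2_identity_frame vec_eq_iff)
qed

lemma section_identity_frame:
  assumes "is_section \<Gamma> U \<sigma>" "pb_cond1 \<omega> U \<sigma>" "x \<in> U"
  shows "fst (snd (\<sigma> x)) = mat 1"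
proof -
  have \<sigma>: "cinf_on \<sigma> U" "\<forall>y\<in>U. \<sigma> y \<in> P" "\<forall>y\<in>U. fst (\<sigma> y) = y"
    using assms(1) unfolding is_section_def by auto
  then have diff: "\<sigma> differentiable (at x)"
    using assms(3) cinf_on_imp_differentiable by blast
  obtain y a \<xi> where "invertible a" and \<sigma>x:
      "\<sigma> x = (y, a, \<chi> i j k. - (\<Sum>l\<in>UNIV. \<Sum>m\<in>UNIV. \<Gamma> i l m y * a$l$j * a$m$k) - (a$i$j * \<xi>$k + \<xi>$j * a$i$k))"
    using proj_structure_elem[OF \<sigma>(2)[rule_format, OF assms(3)]] by blast
  \<comment> \<open>\<open>\<theta>\<^sup>i = (a\<^sup>-\<^sup>1)\<^sup>i\<^sub>j dx\<^sup>j\<close> along \<open>\<sigma>\<close>, while the pullback condition says it is \<open>dx\<^sup>i\<close>\<close>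
  have "matrix_inv a *v w = w" for w
  proof -
    have "frechet_derivative \<sigma> (at x) w \<in> tspace P (\<sigma> x)"
      using frechet_derivative_in_tspace[OF open_U assms(3) diff] \<sigma>(2) by blast
    moreover have "fst (frechet_derivative \<sigma> (at x) w) = w"
      using frechet_derivative_fst_eq[OF open_U assms(3) diff] \<sigma>(3) by blast
    moreover have "fst (\<omega> (\<sigma> x) (frechet_derivative \<sigma> (at x) w)) = w"
      using assms(2,3) unfolding pb_cond1_def by blast
    ultimately show ?thesis
      using omega_eq_theta(1)[OF \<sigma>(2)[rule_format, OF assms(3)]] by (simp add: theta1_eq \<sigma>x)
  qed
  then have "matrix_inv a = mat 1"
    by (simp add: matrix_eq)
  then have "a = mat 1"
    using matrix_mul_matrix_inv[OF \<open>invertible a\<close>] by simp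
  then show ?thesis
    by (simp add: \<sigma>x)
qed

lemma section_eq_adapted_frame:
  assumes "is_section \<Gamma> U \<sigma>" "pb_cond1 \<omega> U \<sigma>" "x \<in> U"
  obtains \<xi> where "\<sigma> x = adapted_frame \<Gamma> \<xi> x"
proof -
  have "\<sigma> x \<in> P" "fst (\<sigma> x) = x"
    using assms(1,3) unfolding is_section_def by auto
  then show ?thesis
    using proj_structure_identity_frame[OF _ section_identity_frame[OF assms]] that by metis
qed

lemma Pi_up_adapted_frame:
  assumes "is_section \<Gamma> U \<sigma>" "pb_cond1 \<omega> U \<sigma>" "x \<in> U" "\<sigma> x = adapted_frame \<Gamma> \<xi> x"
  shows "Pi_up \<omega> \<sigma> i j k x = proj_change \<Gamma> \<xi> i j k x"
proof -
  have "cinf_on \<sigma> U" "\<forall>y\<in>U. \<sigma> y \<in> P" "\<forall>y\<in>U. fst (\<sigma> y) = y"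
    using assms(1) unfolding is_section_def by auto
  moreover have "\<forall>y\<in>U. fst (snd (\<sigma> y)) = mat 1"
    using section_identity_frame[OF assms(1,2)] by blast
  ultimately show ?thesis
    unfolding Pi_up_def using omega_pullback_identity_frame(3)[OF _ _ _ _ assms(3), of \<sigma> "axis k 1"] assms(4)
    by (simp add: adapted_frame_def axis_1_nth sum_negf)
qed

lemma pb_cond1_canonical_section: "pb_cond1 \<omega> U (canonical_section \<Gamma>)"
  unfolding pb_cond1_def
  using omega_pullback_identity_frame(2)[of "canonical_section \<Gamma>"] is_section_canonical_section
  by (simp add: is_section_def canonical_section_eq)

lemma Pi_up_eq_PiG:
  assumes "is_section \<Gamma> U \<sigma>" "pb_cond1 \<omega> U \<sigma>" "x \<in> U" "\<sigma> x = canonical_section \<Gamma> x"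
  shows "Pi_up \<omega> \<sigma> i j k x = PiG \<Gamma> i j k x"
  using Pi_up_adapted_frame[OF assms(1-3)] assms(4)
  by (simp add: canonical_section_def PiG_eq_proj_change)

lemma section_eq_canonical_iff_trace:
  assumes "is_section \<Gamma> U \<sigma>" "pb_cond1 \<omega> U \<sigma>" "x \<in> U"
  shows "\<sigma> x = canonical_section \<Gamma> x \<longleftrightarrow> (\<forall>k. (\<Sum>i\<in>UNIV. Pi_up \<omega> \<sigma> i i k x) = mu \<Gamma> k x)"
proof
  assume "\<sigma> x = canonical_section \<Gamma> x"
  then show "\<forall>k. (\<Sum>i\<in>UNIV. Pi_up \<omega> \<sigma> i i k x) = mu \<Gamma> k x"
    using Pi_up_eq_PiG[OF assms] by (simp add: trace_PiG)
next
  assume trace: "\<forall>k. (\<Sum>i\<in>UNIV. Pi_up \<omega> \<sigma> i i k x) = mu \<Gamma> k x"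
  obtain \<xi> where \<sigma>x: "\<sigma> x = adapted_frame \<Gamma> \<xi> x"
    using section_eq_adapted_frame[OF assms] .
  then have "\<xi> = (\<chi> k. nu \<Gamma> k x)"
    using trace Pi_up_adapted_frame[OF assms] by (simp add: trace_proj_change_eq_mu_iff vec_eq_iff)
  then show "\<sigma> x = canonical_section \<Gamma> x"
    by (simp add: \<sigma>x canonical_section_def)
qed

lemma section_eq_canonical_iff_trace':
  assumes "is_section \<Gamma> U \<sigma>" "pb_cond1 \<omega> U \<sigma>" "x \<in> U"
  shows "\<sigma> x = canonical_section \<Gamma> x \<longleftrightarrow> (\<forall>j. (\<Sum>i\<in>UNIV. Pi_up \<omega> \<sigma> i j i x) = - mu \<Gamma> j x)"
proof
  assume "\<sigma> x = canonical_section \<Gamma> x"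
  then show "\<forall>j. (\<Sum>i\<in>UNIV. Pi_up \<omega> \<sigma> i j i x) = - mu \<Gamma> j x"
    using Pi_up_eq_PiG[OF assms] by (simp add: trace_PiG')
next
  assume trace: "\<forall>j. (\<Sum>i\<in>UNIV. Pi_up \<omega> \<sigma> i j i x) = - mu \<Gamma> j x"
  obtain \<xi> where \<sigma>x: "\<sigma> x = adapted_frame \<Gamma> \<xi> x"
    using section_eq_adapted_frame[OF assms] .
  then have "\<xi> = (\<chi> k. nu \<Gamma> k x)"
    using trace Pi_up_adapted_frame[OF assms] by (simp add: trace_proj_change_eq_minus_mu_iff vec_eq_iff)
  then show "\<sigma> x = canonical_section \<Gamma> x"
    by (simp add: \<sigma>x canonical_section_def)
qed

lemma section_eq_canonical:
  assumes "is_section \<Gamma> U \<sigma>" "pb_cond1 \<omega> U \<sigma>"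
    "\<forall>x\<in>U. \<forall>k. (\<Sum>i\<in>UNIV. Pi_up \<omega> \<sigma> i i k x) = mu \<Gamma> k x" "x \<in> U"
  shows "\<sigma> x = canonical_section \<Gamma> x"
  using section_eq_canonical_iff_trace[OF assms(1,2,4)] assms(3,4) by blast

lemma section_eq_canonical':
  assumes "is_section \<Gamma> U \<sigma>" "pb_cond1 \<omega> U \<sigma>"
    "\<forall>x\<in>U. \<forall>j. (\<Sum>i\<in>UNIV. Pi_up \<omega> \<sigma> i j i x) = - mu \<Gamma> j x" "x \<in> U"
  shows "\<sigma> x = canonical_section \<Gamma> x"
  using section_eq_canonical_iff_trace'[OF assms(1,2,4)] assms(3,4) by blast

lemma curv_trace_eq_0:
  assumes "p \<in> P" "\<And>k. v k \<in> tspace P p" "\<And>k. fst (\<omega> p (v k)) = axis k 1"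
  shows "(\<Sum>i\<in>UNIV. curv \<omega> p (v i) (v l) $ i $ j) = 0"
proof -
  obtain K :: "'n \<Rightarrow> 'n \<Rightarrow> 'n \<Rightarrow> 'n \<Rightarrow> real" where
    K: "\<forall>v\<in>tspace P p. \<forall>w\<in>tspace P p. \<forall>i j.
          curv \<omega> p v w $ i $ j = (\<Sum>k\<in>UNIV. \<Sum>l\<in>UNIV. K i j k l * (fst (\<omega> p v))$k * (fst (\<omega> p w))$l)"
    and traceless: "\<forall>j l. (\<Sum>i\<in>UNIV. K i j i l) = 0"
    using normal assms(1) unfolding normal_proj_conn_def Let_def by blast
  have "curv \<omega> p (v k) (v l) $ i $ j = K i j k l" for i k
    using K assms(2,3) by (simp add: axis_1_nth)
  then show ?thesis
    using traceless by simp
qed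

lemma omega_canonical_section_axis:
  assumes "x \<in> U"
  shows "\<omega> (canonical_section \<Gamma> x) (frechet_derivative (canonical_section \<Gamma>) (at x) (axis k 1)) =
     (axis k 1, \<chi> i j. PiG \<Gamma> i j k x, \<chi> j. Pi_low \<omega> (canonical_section \<Gamma>) j k x)"
proof -
  have "fst (\<omega> (canonical_section \<Gamma> x) (frechet_derivative (canonical_section \<Gamma>) (at x) (axis k 1))) = axis k 1"
    using pb_cond1_canonical_section assms unfolding pb_cond1_def by blast
  moreover have "fst (snd (\<omega> (canonical_section \<Gamma> x) (frechet_derivative (canonical_section \<Gamma>) (at x) (axis k 1))))
      = (\<chi> i j. PiG \<Gamma> i j k x)"
    using Pi_up_eq_PiG[OF is_section_canonical_section pb_cond1_canonical_section assms]
    unfolding Pi_up_def by (simp add: vec_eq_iff)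
  ultimately show ?thesis
    unfolding Pi_low_def by (simp add: vec_eq_iff prod_eq_iff)
qed

lemma curv_canonical_section:
  assumes "x \<in> U"
  defines "v \<equiv> \<lambda>k. frechet_derivative (canonical_section \<Gamma>) (at x) (axis k 1)"
    and "G \<equiv> \<lambda>i j k. PiG \<Gamma> i j k x"
    and "Q \<equiv> \<lambda>j k. Pi_low \<omega> (canonical_section \<Gamma>) j k x"
  shows "curv \<omega> (canonical_section \<Gamma> x) (v k) (v l) $ i $ j =
     pder (axis k 1) (PiG \<Gamma> i j l) x - pder (axis l 1) (PiG \<Gamma> i j k) x
     + (\<Sum>m\<in>UNIV. G i m k * G m j l) - (\<Sum>m\<in>UNIV. G i m l * G m j k)
     + (kd i k * Q j l - kd i l * Q j k) - (Q l k - Q k l) * kd i j"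
proof -
  have "dtheta2 (canonical_section \<Gamma> x) (v k) (v l) $ i $ j =
      pder (axis k 1) (PiG \<Gamma> i j l) x - pder (axis l 1) (PiG \<Gamma> i j k) x"
    using pder_theta2_canonical_section[OF assms(1)] by (simp add: dtheta2_def v_def)
  moreover have om: "\<omega> (canonical_section \<Gamma> x) (v m) = (axis m 1, \<chi> i j. G i j m, \<chi> j. Q j m)" for m
    unfolding v_def G_def Q_def by (rule omega_canonical_section_axis[OF assms(1)])
  ultimately show ?thesis
    using curv_nth[where \<omega>=\<omega> and p="canonical_section \<Gamma> x" and v="v k" and w="v l", OF om om, of i j]
    by (simp add: v_def G_def Q_def axis_1_nth)
qed

lemma Ricci_contraction_canonical_section:
  assumes "x \<in> U"
  defines "v \<equiv> \<lambda>k. frechet_derivative (canonical_section \<Gamma>) (at x) (axis k 1)"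
    and "Q \<equiv> \<lambda>j k. Pi_low \<omega> (canonical_section \<Gamma>) j k x"
  shows "(\<Sum>i\<in>UNIV. curv \<omega> (canonical_section \<Gamma> x) (v i) (v l) $ i $ j)
           = PiT \<Gamma> j l x + real CARD('n) * Q j l - Q l j"
proof -
  define G where "G i j k = PiG \<Gamma> i j k x" for i j k
  have "(\<Sum>i\<in>UNIV. pder (axis l 1) (PiG \<Gamma> i j i) x) = pder (axis l 1) (\<lambda>y. \<Sum>i\<in>UNIV. PiG \<Gamma> i j i y) x"
    by (rule pder_sum[symmetric]) (auto intro: PiG_differentiable[OF assms(1)])
  also have "\<dots> = - pder (axis l 1) (mu \<Gamma> j) x"
    by (simp add: trace_PiG' pder_minus mu_differentiable[OF assms(1)])
  finally have d_trace: "(\<Sum>i\<in>UNIV. pder (axis l 1) (PiG \<Gamma> i j i) x) = - pder (axis l 1) (mu \<Gamma> j) x" .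
  have mu_term: "(\<Sum>i\<in>UNIV. \<Sum>m\<in>UNIV. G i m i * G m j l) = - (\<Sum>m\<in>UNIV. mu \<Gamma> m x * G m j l)"
    by (subst sum.swap) (simp add: G_def sum_distrib_right[symmetric] trace_PiG' sum_negf)
  have quadratic_term:
    "(\<Sum>i\<in>UNIV. \<Sum>m\<in>UNIV. G i m l * G m j i) = (\<Sum>\<alpha>\<in>UNIV. \<Sum>\<beta>\<in>UNIV. G \<alpha> j \<beta> * G \<beta> \<alpha> l)"
    by (subst sum.swap) (simp add: mult.commute)
  have "(\<Sum>i\<in>UNIV. curv \<omega> (canonical_section \<Gamma> x) (v i) (v l) $ i $ j) =
      (\<Sum>i\<in>UNIV. pder (axis i 1) (PiG \<Gamma> i j l) x) - (\<Sum>i\<in>UNIV. pder (axis l 1) (PiG \<Gamma> i j i) x)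
      + (\<Sum>i\<in>UNIV. \<Sum>m\<in>UNIV. G i m i * G m j l) - (\<Sum>i\<in>UNIV. \<Sum>m\<in>UNIV. G i m l * G m j i)
      + (\<Sum>i\<in>UNIV. kd i i * Q j l - kd i l * Q j i) - (\<Sum>i\<in>UNIV. (Q l i - Q i l) * kd i j)"
    unfolding v_def Q_def G_def curv_canonical_section[OF assms(1)] by (simp add: sum.distrib sum_subtractf)
  also have "\<dots> = PiT \<Gamma> j l x + real CARD('n) * Q j l - Q l j"
    unfolding d_trace mu_term quadratic_term
    by (simp add: PiT_def G_def sum_subtractf sum_kd_diag left_diff_distrib)
  finally show ?thesis .
qed

lemma Pi_low_canonical_section_relation:
  assumes "x \<in> U"
  shows "PiT \<Gamma> j l x + real CARD('n) * Pi_low \<omega> (canonical_section \<Gamma>) j l x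
           - Pi_low \<omega> (canonical_section \<Gamma>) l j x = 0"
proof -
  define v where "v k = frechet_derivative (canonical_section \<Gamma>) (at x) (axis k 1)" for k
  have "(\<Sum>i\<in>UNIV. curv \<omega> (canonical_section \<Gamma> x) (v i) (v l) $ i $ j) = 0"
  proof (rule curv_trace_eq_0)
    show "canonical_section \<Gamma> x \<in> P"
      using is_section_canonical_section assms unfolding is_section_def by blast
    show "v k \<in> tspace P (canonical_section \<Gamma> x)" for k
      unfolding v_def using cinf_on_canonical_section is_section_canonical_section assms
      by (intro frechet_derivative_in_tspace[OF open_U assms cinf_on_imp_differentiable])
         (auto simp: is_section_def)
    show "fst (\<omega> (canonical_section \<Gamma> x) (v k)) = axis k 1" for k
      unfolding v_def using pb_cond1_canonical_section assms unfolding pb_cond1_def by blast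
  qed
  then show ?thesis
    using Ricci_contraction_canonical_section[OF assms] by (simp add: v_def)
qed

lemma Pi_low_canonical_section:
  assumes "CARD('n) \<ge> 2" "x \<in> U"
  shows "Pi_low \<omega> (canonical_section \<Gamma>) j k x = PiL \<Gamma> j k x"
proof -
  have "(real CARD('n))\<^sup>2 \<ge> 2\<^sup>2"
    using assms(1) by (intro power_mono) auto
  then have "(real CARD('n))\<^sup>2 \<noteq> 1"
    by simp
  from linear_transpose_system_solution[OF this Pi_low_canonical_section_relation[OF assms(2)]]
  show ?thesis
    by (simp add: PiL_def)
qed

lemma Pi_low_section:
  assumes "CARD('n) \<ge> 2" "is_section \<Gamma> U \<sigma>" "pb_cond1 \<omega> U \<sigma>"
    "\<forall>x\<in>U. \<forall>k. (\<Sum>i\<in>UNIV. Pi_up \<omega> \<sigma> i i k x) = mu \<Gamma> k x" "x \<in> U"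
  shows "Pi_low \<omega> \<sigma> j k x = PiL \<Gamma> j k x"
proof -
  have "Pi_low \<omega> \<sigma> j k x = Pi_low \<omega> (canonical_section \<Gamma>) j k x"
    using section_eq_canonical[OF assms(2-4)]
    by (intro Pi_low_cong[OF open_U assms(5) cinf_on_imp_differentiable[OF cinf_on_canonical_section assms(5)]])
  then show ?thesis
    using Pi_low_canonical_section[OF assms(1,5)] by simp
qed

end

theorem mainTheorem5:
  fixes U :: "(real^'n) set"
    and \<Gamma> :: "'n \<Rightarrow> 'n \<Rightarrow> 'n \<Rightarrow> real^'n \<Rightarrow> real"
    and \<omega> :: "'n frame \<Rightarrow> 'n frame \<Rightarrow> 'n galg"
  assumes "CARD('n) \<ge> 2"
    and "open U"
    and "\<forall>i j k. cinf_on (\<Gamma> i j k) U"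
    and "normal_proj_conn \<Gamma> U \<omega>"
  shows
    "(\<exists>\<sigma>. is_section \<Gamma> U \<sigma> \<and> pb_cond1 \<omega> U \<sigma>
          \<and> (\<forall>x\<in>U. \<forall>k. (\<Sum>i\<in>UNIV. Pi_up \<omega> \<sigma> i i k x) = mu \<Gamma> k x))
   \<and> (\<forall>\<sigma> \<sigma>'. is_section \<Gamma> U \<sigma> \<and> pb_cond1 \<omega> U \<sigma>
          \<and> (\<forall>x\<in>U. \<forall>k. (\<Sum>i\<in>UNIV. Pi_up \<omega> \<sigma> i i k x) = mu \<Gamma> k x)
        \<and> is_section \<Gamma> U \<sigma>' \<and> pb_cond1 \<omega> U \<sigma>'
          \<and> (\<forall>x\<in>U. \<forall>k. (\<Sum>i\<in>UNIV. Pi_up \<omega> \<sigma>' i i k x) = mu \<Gamma> k x)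
        \<longrightarrow> (\<forall>x\<in>U. \<sigma> x = \<sigma>' x))
   \<and> (\<forall>\<sigma> \<sigma>'. is_section \<Gamma> U \<sigma> \<and> pb_cond1 \<omega> U \<sigma>
          \<and> (\<forall>x\<in>U. \<forall>j. (\<Sum>i\<in>UNIV. Pi_up \<omega> \<sigma> i j i x) = - mu \<Gamma> j x)
        \<and> is_section \<Gamma> U \<sigma>' \<and> pb_cond1 \<omega> U \<sigma>'
          \<and> (\<forall>x\<in>U. \<forall>j. (\<Sum>i\<in>UNIV. Pi_up \<omega> \<sigma>' i j i x) = - mu \<Gamma> j x)
        \<longrightarrow> (\<forall>x\<in>U. \<sigma> x = \<sigma>' x))
   \<and> (\<forall>\<sigma>. is_section \<Gamma> U \<sigma> \<and> pb_cond1 \<omega> U \<sigma>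
          \<and> (\<forall>x\<in>U. \<forall>k. (\<Sum>i\<in>UNIV. Pi_up \<omega> \<sigma> i i k x) = mu \<Gamma> k x)
        \<longrightarrow> (\<forall>x\<in>U. \<forall>j. (\<Sum>i\<in>UNIV. Pi_up \<omega> \<sigma> i j i x) = - mu \<Gamma> j x)
          \<and> (\<forall>x\<in>U. \<forall>i j k. Pi_up \<omega> \<sigma> i j k x = PiG \<Gamma> i j k x)
          \<and> (\<forall>x\<in>U. \<forall>j k. Pi_low \<omega> \<sigma> j k x = PiL \<Gamma> j k x))"
proof -
  interpret normal_projective_chart \<Gamma> U \<omega>
    by unfold_locales (use assms in auto)
  show ?thesis
    apply (intro conjI allI impI ballI; (elim conjE)?)
    subgoal
      using is_section_canonical_section pb_cond1_canonical_section section_eq_canonical_iff_trace by blast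
    subgoal for \<sigma> \<sigma>' x
      using section_eq_canonical[of \<sigma> x] section_eq_canonical[of \<sigma>' x] by simp
    subgoal for \<sigma> \<sigma>' x
      using section_eq_canonical'[of \<sigma> x] section_eq_canonical'[of \<sigma>' x] by simp
    subgoal for \<sigma> x
      using Pi_up_eq_PiG[of \<sigma> x] section_eq_canonical[of \<sigma> x] by (simp add: trace_PiG')
    subgoal for \<sigma> x
      using Pi_up_eq_PiG[of \<sigma> x] section_eq_canonical[of \<sigma> x] by simp
    subgoal for \<sigma> x
      using Pi_low_section[OF assms(1), of \<sigma> x] by simp
    done
qed

end
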